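(* Let $G_1$ and $G_2$ be graphs, where $G_i$ has order $n_i$, minimum degree $\delta_i$, maximum degree $\Delta_i$ and independence number $\alpha(G_i)$, $i\in\{1,2\}$. Then for every integer $k\in\{1-\delta_1-\delta_2,\dots,\Delta_1+\Delta_2\}$, $$\phi_k^d(G_1\times G_2)\ge \alpha(G_1)\alpha(G_2)+\min\{n_1-\alpha(G_1),\,n_2-\alpha(G_2)\}.$$
   Context: All graphs are finite and simple. For a graph $G=(V,E)$, a set $S\subseteq V$ and $v\in V$, let $\delta_S(v)=|\{u\in S: uv\in E\}|$, $\delta(v)$ the degree of $v$, and $\overline{S}=V\setminus S$. For an integer $k$, a non-empty set $S\subseteq V$ is a defensive $k$-alliance if $\delta_S(v)\ge \delta_{\overline S}(v)+k$ for every $v\in S$. A set $X\subseteq V$ is a defensive $k$-alliance free set ($k$-daf set) if no defensive $k$-alliance $S$ satisfies $S\subseteq X$. $\phi_k^d(G)$ denotes the maximum cardinality of a $k$-daf set in $G$. The Cartesian product $G_1\times G_2$ of $G_1=(V_1,E_1)$, $G_2=(V_2,E_2)$ has vertex set $V_1\times V_2$, with $(a,b)$ adjacent to $(c,d)$ iff either $a=c$ and $bd\in E_2$, or $b=d$ and $ac\in E_1$. *)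

theory Defs
  imports Main
begin

definition graph :: "'a set \<Rightarrow> ('a \<Rightarrow> 'a \<Rightarrow> bool) \<Rightarrow> bool" where
  "graph V E \<longleftrightarrow> finite V \<and>
     (\<forall>u v. E u v \<longrightarrow> u \<in> V \<and> v \<in> V \<and> u \<noteq> v \<and> E v u)"

definition deg_in :: "'a set \<Rightarrow> ('a \<Rightarrow> 'a \<Rightarrow> bool) \<Rightarrow> 'a set \<Rightarrow> 'a \<Rightarrow> nat" where
  "deg_in V E S v = card {u \<in> S. E u v}"

definition degree :: "'a set \<Rightarrow> ('a \<Rightarrow> 'a \<Rightarrow> bool) \<Rightarrow> 'a \<Rightarrow> nat" where
  "degree V E v = card {u \<in> V. E u v}"

definition min_degree :: "'a set \<Rightarrow> ('a \<Rightarrow> 'a \<Rightarrow> bool) \<Rightarrow> nat" where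
  "min_degree V E = Min (degree V E ` V)"

definition max_degree :: "'a set \<Rightarrow> ('a \<Rightarrow> 'a \<Rightarrow> bool) \<Rightarrow> nat" where
  "max_degree V E = Max (degree V E ` V)"

definition independent :: "'a set \<Rightarrow> ('a \<Rightarrow> 'a \<Rightarrow> bool) \<Rightarrow> 'a set \<Rightarrow> bool" where
  "independent V E S \<longleftrightarrow> S \<subseteq> V \<and> (\<forall>u\<in>S. \<forall>v\<in>S. \<not> E u v)"

definition indep_number :: "'a set \<Rightarrow> ('a \<Rightarrow> 'a \<Rightarrow> bool) \<Rightarrow> nat" where
  "indep_number V E = Max (card ` {S. independent V E S})"

definition defensive_alliance :: "'a set \<Rightarrow> ('a \<Rightarrow> 'a \<Rightarrow> bool) \<Rightarrow> int \<Rightarrow> 'a set \<Rightarrow> bool" where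
  "defensive_alliance V E k S \<longleftrightarrow> S \<noteq> {} \<and> S \<subseteq> V \<and>
     (\<forall>v\<in>S. int (deg_in V E S v) \<ge> int (deg_in V E (V - S) v) + k)"

definition daf_set :: "'a set \<Rightarrow> ('a \<Rightarrow> 'a \<Rightarrow> bool) \<Rightarrow> int \<Rightarrow> 'a set \<Rightarrow> bool" where
  "daf_set V E k X \<longleftrightarrow> X \<subseteq> V \<and> \<not> (\<exists>S. S \<subseteq> X \<and> defensive_alliance V E k S)"

definition phi_d :: "'a set \<Rightarrow> ('a \<Rightarrow> 'a \<Rightarrow> bool) \<Rightarrow> int \<Rightarrow> nat" where
  "phi_d V E k = Max (card ` {X. daf_set V E k X})"

definition cart_edge :: "('a \<Rightarrow> 'a \<Rightarrow> bool) \<Rightarrow> ('b \<Rightarrow> 'b \<Rightarrow> bool) \<Rightarrow> ('a \<times> 'b) \<Rightarrow> ('a \<times> 'b) \<Rightarrow> bool" where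
  "cart_edge E1 E2 x y \<longleftrightarrow>
     (fst x = fst y \<and> E2 (snd x) (snd y)) \<or> (snd x = snd y \<and> E1 (fst x) (fst y))"

end

theory Submission
  imports Defs
begin

(* An independent set X of a graph is k-alliance free as soon as
   every vertex v of X satisfies degree(v) + k >= 1: inside a subset S of X the
   vertex v has no neighbours, so the defensive condition would demand
   0 >= degree(v) + k.  In the Cartesian product G1 x G2 every vertex (a,b) has
   degree >= deg(a) + deg(b) >= delta1 + delta2, so the hypothesis
   k >= 1 - delta1 - delta2 makes every independent set of the product k-daf.
   It remains to exhibit a large independent set of G1 x G2: take maximum
   independent sets I1, I2 and add the "diagonal" {(a, f a) | a in A} of an
   injection f from a set A of m = min(n1 - alpha1, n2 - alpha2) vertices
   outside I1 into the vertices outside I2. *)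

lemma graph_finite: "graph V E \<Longrightarrow> finite V"
  by (simp add: graph_def)

lemma indep_number_attained:
  assumes "graph V E"
  obtains I where "independent V E I" and "card I = indep_number V E"
proof -
  have "{S. independent V E S} \<subseteq> Pow V" by (auto simp: independent_def)
  hence "finite {S. independent V E S}"
    using graph_finite[OF assms] by (meson finite_Pow_iff finite_subset)
  moreover have "{} \<in> {S. independent V E S}" by (simp add: independent_def)
  ultimately have "indep_number V E \<in> card ` {S. independent V E S}"
    unfolding indep_number_def by (intro Max_in) auto
  thus ?thesis using that by auto
qed

lemma daf_set_card_le_phi_d:
  assumes "finite V" and "daf_set V E k X"
  shows "card X \<le> phi_d V E k"
proof -
  have "{X. daf_set V E k X} \<subseteq> Pow V" by (auto simp: daf_set_def)
  hence "finite (card ` {X. daf_set V E k X})"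
    using assms(1) by (meson finite_Pow_iff finite_imageI finite_subset)
  thus ?thesis unfolding phi_d_def using assms(2) by (intro Max_ge) auto
qed

text \<open>An independent set is k-alliance free when each of its vertices has
  degree at least \<open>1 - k\<close>: a vertex of a candidate alliance inside it has no
  neighbours in the alliance and all its neighbours outside.\<close>
lemma independent_imp_daf_set:
  assumes indep: "independent V E X"
    and deg: "\<And>v. v \<in> X \<Longrightarrow> 1 \<le> int (degree V E v) + k"
  shows "daf_set V E k X"
  unfolding daf_set_def
proof (intro conjI notI)
  show "X \<subseteq> V" using indep by (simp add: independent_def)
  assume "\<exists>S. S \<subseteq> X \<and> defensive_alliance V E k S"
  then obtain S v where SX: "S \<subseteq> X" and all: "defensive_alliance V E k S" and v: "v \<in> S"
    unfolding defensive_alliance_def by blast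
  have no_nbr: "\<not> E u v" if "u \<in> X" for u
    using indep that SX v by (auto simp: independent_def)
  have inside: "deg_in V E S v = 0"
    unfolding deg_in_def using no_nbr SX by (auto simp: card_eq_0_iff)
  have "{u \<in> V - S. E u v} = {u \<in> V. E u v}" using no_nbr SX by blast
  hence outside: "deg_in V E (V - S) v = degree V E v"
    unfolding deg_in_def degree_def by simp
  have "int (deg_in V E S v) \<ge> int (deg_in V E (V - S) v) + k"
    using all v unfolding defensive_alliance_def by blast
  thus False using inside outside deg[of v] SX v by auto
qed

text \<open>In the Cartesian product the degrees of the factors add up (at least):
  the neighbours of \<open>(a,b)\<close> include the disjoint copies of the
  neighbourhoods of \<open>a\<close> and \<open>b\<close>.\<close>
lemma cart_degree_ge:
  assumes g1: "graph V1 E1" and g2: "graph V2 E2" and a: "a \<in> V1" and b: "b \<in> V2"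
  shows "degree V1 E1 a + degree V2 E2 b \<le> degree (V1 \<times> V2) (cart_edge E1 E2) (a, b)"
proof -
  have f1: "finite V1" and f2: "finite V2" using g1 g2 by (auto simp: graph_def)
  let ?A = "(\<lambda>x. (x, b)) ` {u \<in> V1. E1 u a}"
  let ?B = "(\<lambda>y. (a, y)) ` {u \<in> V2. E2 u b}"
  have cA: "card ?A = degree V1 E1 a"
    unfolding degree_def by (rule card_image) (auto simp: inj_on_def)
  have cB: "card ?B = degree V2 E2 b"
    unfolding degree_def by (rule card_image) (auto simp: inj_on_def)
  have disjoint: "?A \<inter> ?B = {}" using g1 unfolding graph_def by auto
  have sub: "?A \<union> ?B \<subseteq> {u \<in> V1 \<times> V2. cart_edge E1 E2 u (a, b)}"
    using a b by (auto simp: cart_edge_def)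
  have "card ?A + card ?B = card (?A \<union> ?B)"
    using disjoint f1 f2 by (simp add: card_Un_disjoint)
  also have "\<dots> \<le> degree (V1 \<times> V2) (cart_edge E1 E2) (a, b)"
    unfolding degree_def using f1 f2 by (intro card_mono[OF _ sub]) auto
  finally show ?thesis using cA cB by simp
qed

corollary cart_degree_ge_min_degrees:
  assumes "graph V1 E1" and "graph V2 E2" and "v \<in> V1 \<times> V2"
  shows "min_degree V1 E1 + min_degree V2 E2 \<le> degree (V1 \<times> V2) (cart_edge E1 E2) v"
proof -
  obtain a b where v: "v = (a, b)" "a \<in> V1" "b \<in> V2" using assms(3) by auto
  have "min_degree V1 E1 \<le> degree V1 E1 a" "min_degree V2 E2 \<le> degree V2 E2 b"
    unfolding min_degree_def using v graph_finite[OF assms(1)] graph_finite[OF assms(2)] by auto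
  thus ?thesis using cart_degree_ge[OF assms(1,2) v(2,3)] v(1) by simp
qed

lemma cart_independent_diagonal:
  assumes g1: "graph V1 E1" and g2: "graph V2 E2"
    and I1: "independent V1 E1 I1" and I2: "independent V2 E2 I2"
    and A: "A \<subseteq> V1 - I1" and f: "inj_on f A" "f ` A \<subseteq> V2 - I2"
  shows "independent (V1 \<times> V2) (cart_edge E1 E2) (I1 \<times> I2 \<union> (\<lambda>a. (a, f a)) ` A)"
proof -
  have irr1: "\<not> E1 x x" and irr2: "\<not> E2 y y" for x y
    using g1 g2 by (auto simp: graph_def)
  have i1: "\<not> E1 x y" if "x \<in> I1" "y \<in> I1" for x y
    using I1 that by (auto simp: independent_def)
  have i2: "\<not> E2 x y" if "x \<in> I2" "y \<in> I2" for x y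
    using I2 that by (auto simp: independent_def)
  have diag_diag: "\<not> cart_edge E1 E2 (a, f a) (a', f a')" if "a \<in> A" "a' \<in> A" for a a'
    using that irr1 irr2 f(1) unfolding cart_edge_def inj_on_def by auto
  have block_diag: "\<not> cart_edge E1 E2 (x, y) (a, f a) \<and> \<not> cart_edge E1 E2 (a, f a) (x, y)"
    if "x \<in> I1" "y \<in> I2" "a \<in> A" for x y a
    using that A f(2) unfolding cart_edge_def by auto
  show ?thesis
    using I1 I2 A f(2) i1 i2 diag_diag block_diag
    by (auto simp: independent_def cart_edge_def)
qed

lemma cart_large_independent_set:
  assumes g1: "graph V1 E1" and g2: "graph V2 E2"
  obtains X where "independent (V1 \<times> V2) (cart_edge E1 E2) X"
    and "card X = indep_number V1 E1 * indep_number V2 E2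
                  + min (card V1 - indep_number V1 E1) (card V2 - indep_number V2 E2)"
proof -
  have f1: "finite V1" and f2: "finite V2" using graph_finite g1 g2 by blast+
  obtain I1 where I1: "independent V1 E1 I1" "card I1 = indep_number V1 E1"
    using indep_number_attained[OF g1] by blast
  obtain I2 where I2: "independent V2 E2 I2" "card I2 = indep_number V2 E2"
    using indep_number_attained[OF g2] by blast
  define m where "m = min (card V1 - indep_number V1 E1) (card V2 - indep_number V2 E2)"
  have "card (V1 - I1) = card V1 - indep_number V1 E1"
       "card (V2 - I2) = card V2 - indep_number V2 E2"
    using I1 I2 f1 f2 by (auto simp: independent_def card_Diff_subset finite_subset)
  then obtain A B where A: "A \<subseteq> V1 - I1" "card A = m" and B: "B \<subseteq> V2 - I2" "card B = m"
    using obtain_subset_with_card_n[of m "V1 - I1"] obtain_subset_with_card_n[of m "V2 - I2"]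
    unfolding m_def by (metis min.cobounded1 min.cobounded2)
  then obtain f where f: "bij_betw f A B"
    using f1 f2 by (metis finite_Diff finite_same_card_bij finite_subset)
  define X where "X = I1 \<times> I2 \<union> (\<lambda>a. (a, f a)) ` A"
  have "independent (V1 \<times> V2) (cart_edge E1 E2) X"
    unfolding X_def using A B f
    by (intro cart_independent_diagonal[OF g1 g2 I1(1) I2(1)]) (auto simp: bij_betw_def)
  moreover have "card X = card I1 * card I2 + m"
    unfolding X_def using A I1 I2 f1 f2
    by (subst card_Un_disjoint)
       (auto simp: card_image inj_on_def card_cartesian_product independent_def
             intro: finite_subset)
  ultimately show ?thesis using that I1(2) I2(2) m_def by simp
qed

theorem mainTheorem1:
  fixes V1 :: "'a set" and E1 :: "'a \<Rightarrow> 'a \<Rightarrow> bool"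
    and V2 :: "'b set" and E2 :: "'b \<Rightarrow> 'b \<Rightarrow> bool"
    and k :: int
  assumes "graph V1 E1" and "graph V2 E2"
    and "V1 \<noteq> {}" and "V2 \<noteq> {}"
    and "1 - int (min_degree V1 E1) - int (min_degree V2 E2) \<le> k"
    and "k \<le> int (max_degree V1 E1) + int (max_degree V2 E2)"
  shows "phi_d (V1 \<times> V2) (cart_edge E1 E2) k \<ge>
           indep_number V1 E1 * indep_number V2 E2
           + min (card V1 - indep_number V1 E1) (card V2 - indep_number V2 E2)"
proof -
  note g1 = assms(1) and g2 = assms(2)
  obtain X where indep: "independent (V1 \<times> V2) (cart_edge E1 E2) X"
    and card_X: "card X = indep_number V1 E1 * indep_number V2 E2
                  + min (card V1 - indep_number V1 E1) (card V2 - indep_number V2 E2)"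
    using cart_large_independent_set[OF g1 g2] by blast
  have "daf_set (V1 \<times> V2) (cart_edge E1 E2) k X"
  proof (rule independent_imp_daf_set[OF indep])
    fix v assume "v \<in> X"
    hence "min_degree V1 E1 + min_degree V2 E2 \<le> degree (V1 \<times> V2) (cart_edge E1 E2) v"
      using indep cart_degree_ge_min_degrees[OF g1 g2] by (auto simp: independent_def)
    thus "1 \<le> int (degree (V1 \<times> V2) (cart_edge E1 E2) v) + k" using assms(5) by linarith
  qed
  moreover have "finite (V1 \<times> V2)" using graph_finite[OF g1] graph_finite[OF g2] by simp
  ultimately show ?thesis using daf_set_card_le_phi_d card_X by metis
qed

end
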